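(* With high probability, any two distinct vertices each of degree at most $2$ in $G_{t_0}$ are at distance greater than $10$ in $G_{t_1}$.
   Context: The random graph process: $E_0=\emptyset$, $E_m=E_{m-1}\cup\{e_m\}$ with $e_m$ uniform among edges of $K_n$ not in $E_{m-1}$, and $G_m=([n],E_m)$. Logarithms are natural. $t_0=\frac n2(\log n-2\log\log n)$, $t_1=\frac n2(\log n+2\log\log n)$. "With high probability" means with probability $1-o(1)$ as $n\to\infty$. *)

theory Defs
  imports "HOL-Probability.Probability"
begin

text \<open>Vertex set [n] rendered as {0..<n}; edges of K_n are 2-element subsets.\<close>
definition Kn_edges :: "nat \<Rightarrow> nat set set" where
  "Kn_edges n = {e. e \<subseteq> {..<n} \<and> card e = 2}"

fun graph_process :: "nat \<Rightarrow> nat \<Rightarrow> nat set list pmf" where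
  "graph_process n 0 = return_pmf []"
| "graph_process n (Suc m) =
     bind_pmf (graph_process n m)
       (\<lambda>es. map_pmf (\<lambda>e. es @ [e]) (pmf_of_set (Kn_edges n - set es)))"

definition degree :: "nat set set \<Rightarrow> nat \<Rightarrow> nat" where
  "degree E v = card {e \<in> E. v \<in> e}"

definition walk_of_len :: "nat set set \<Rightarrow> nat \<Rightarrow> nat \<Rightarrow> nat \<Rightarrow> bool" where
  "walk_of_len E u v k = (\<exists>xs. length xs = Suc k \<and> hd xs = u \<and> last xs = v \<and>
      (\<forall>i<k. {xs ! i, xs ! Suc i} \<in> E))"

text \<open>Graph distance (infinite if no path).\<close>
definition gdist :: "nat set set \<Rightarrow> nat \<Rightarrow> nat \<Rightarrow> enat" where
  "gdist E u v = (INF k \<in> {k. walk_of_len E u v k}. enat k)"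

definition t0 :: "nat \<Rightarrow> nat" where
  "t0 n = nat \<lfloor>real n / 2 * (ln (real n) - 2 * ln (ln (real n)))\<rfloor>"

definition t1 :: "nat \<Rightarrow> nat" where
  "t1 n = nat \<lfloor>real n / 2 * (ln (real n) + 2 * ln (ln (real n)))\<rfloor>"

end

theory Submission
  imports Defs "HOL-Real_Asymp.Real_Asymp"
begin

(* A first-moment argument.  Call an edge sequence es of the process "bad" if two
   distinct vertices u, v of degree at most 2 in the graph of its first t0 edges are
   joined by a walk of length at most 10 in the graph of all its t1 edges.  A bad es
   contains a path x_0 = u, ..., x_j = v with 1 <= j <= 10.  Recording the positions in
   es of the j path edges, and the b <= 4 edges among the first t0 ones that touch u or v
   without lying on the path (with their positions), gives a "witness".  A witness fixes
   j + b entries of es and forces all other entries before time t0 to avoid the >= 2n-17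
   remaining edges at u or v; its probability is therefore at most
   (N - t1)^-(j+b) (1 - (2n-17)/N)^(t0-14), N = n choose 2, while there are at most
   n^(j+1) t1^j (2n t0)^b witnesses.  The union bound gives P(bad) <= F(n) for an
   explicit real function F, and F(n) -> 0 by real_asymp. *)

section \<open>The graph process\<close>

lemma measure_bind_pmf_le:
  assumes "\<And>x. x \<in> set_pmf p \<Longrightarrow> measure_pmf.prob (f x) A \<le> c * indicator B x" and "c \<ge> 0"
  shows "measure_pmf.prob (bind_pmf p f) A \<le> c * measure_pmf.prob p B"
proof -
  have "emeasure (measure_pmf (bind_pmf p f)) A = (\<integral>\<^sup>+x. emeasure (measure_pmf (f x)) A \<partial>measure_pmf p)"
    by simp
  also have "\<dots> \<le> (\<integral>\<^sup>+x. ennreal c * indicator B x \<partial>measure_pmf p)"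
  proof (rule nn_integral_mono_AE, rule AE_pmfI)
    fix x assume x: "x \<in> set_pmf p"
    have "emeasure (measure_pmf (f x)) A = ennreal (measure_pmf.prob (f x) A)"
      by (simp add: measure_pmf.emeasure_eq_measure)
    also have "\<dots> \<le> ennreal (c * indicator B x)" using assms(1)[OF x] by (rule ennreal_leI)
    also have "\<dots> = ennreal c * indicator B x" by (simp add: indicator_def)
    finally show "emeasure (measure_pmf (f x)) A \<le> ennreal c * indicator B x" .
  qed
  also have "\<dots> = ennreal (c * measure_pmf.prob p B)"
    using assms(2) by (simp add: nn_integral_cmult_indicator measure_pmf.emeasure_eq_measure ennreal_mult)
  finally show ?thesis
    by (simp add: measure_pmf.emeasure_eq_measure assms(2))
qed

lemma finite_Kn_edges: "finite (Kn_edges n)"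
  unfolding Kn_edges_def by (rule finite_subset[of _ "Pow {..<n}"]) auto

lemma card_Kn_edges: "card (Kn_edges n) = n choose 2"
  unfolding Kn_edges_def using n_subsets[of "{..<n}" 2] by simp

lemma graph_process_support:
  assumes "m \<le> card (Kn_edges n)" and "es \<in> set_pmf (graph_process n m)"
  shows "length es = m \<and> distinct es \<and> set es \<subseteq> Kn_edges n"
  using assms
proof (induction m arbitrary: es)
  case 0 then show ?case by simp
next
  case (Suc m)
  from Suc.prems(2) obtain xs e where xs: "xs \<in> set_pmf (graph_process n m)"
    and e: "e \<in> set_pmf (pmf_of_set (Kn_edges n - set xs))" and es: "es = xs @ [e]" by auto
  have IH: "length xs = m \<and> distinct xs \<and> set xs \<subseteq> Kn_edges n" using Suc xs by simp
  then have "card (Kn_edges n - set xs) = card (Kn_edges n) - m"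
    using finite_Kn_edges by (simp add: card_Diff_subset distinct_card)
  then have "Kn_edges n - set xs \<noteq> {}" using Suc.prems(1) by fastforce
  then have "e \<in> Kn_edges n - set xs" using e finite_Kn_edges by simp
  then show ?case using IH es by auto
qed

section \<open>Pinned events\<close>

text \<open>Only the first m
  positions are constrained, so that the event makes sense for the process at time m.\<close>
definition pinned_event ::
  "(nat \<Rightarrow> nat set option) \<Rightarrow> nat \<Rightarrow> nat set set \<Rightarrow> nat \<Rightarrow> nat set list set" where
  "pinned_event pin T D m = {es. (\<forall>p<m. \<forall>e. pin p = Some e \<longrightarrow> es ! p = e) \<and>
                      (\<forall>q<m. q < T \<longrightarrow> pin q = None \<longrightarrow> es ! q \<notin> D)}"

text \<open>The conditional probability that step p of the process (among N edges) respects
  the pinned event: a pinned position hits one edge among at least N - p candidates, an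
  unpinned position before T misses D.\<close>
definition step_factor :: "(nat \<Rightarrow> nat set option) \<Rightarrow> nat \<Rightarrow> nat set set \<Rightarrow> nat \<Rightarrow> nat \<Rightarrow> real" where
  "step_factor pin T D N p = (case pin p of Some _ \<Rightarrow> 1 / real (N - p)
       | None \<Rightarrow> (if p < T then 1 - real (card D) / real N else 1))"

lemma pinned_event_snoc:
  assumes "length es = m"
  shows "es @ [e] \<in> pinned_event pin T D (Suc m) \<longleftrightarrow> es \<in> pinned_event pin T D m \<and>
     (\<forall>e'. pin m = Some e' \<longrightarrow> e = e') \<and> (m < T \<longrightarrow> pin m = None \<longrightarrow> e \<notin> D)"
  using assms unfolding pinned_event_def by (auto simp: nth_append less_Suc_eq)

lemma step_factor_nonneg:
  assumes "D \<subseteq> Kn_edges n"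
  shows "step_factor pin T D (card (Kn_edges n)) p \<ge> 0"
proof -
  have "card D \<le> card (Kn_edges n)" using assms finite_Kn_edges card_mono by blast
  then show ?thesis unfolding step_factor_def
    by (auto split: option.split simp: divide_le_eq_1)
qed

lemma pinned_event_avoids:
  assumes "es \<in> pinned_event pin T D m" and "length es = m" and "m \<le> T"
    and "\<And>p e. pin p = Some e \<Longrightarrow> e \<notin> D"
  shows "set es \<inter> D = {}"
proof -
  have "es ! q \<notin> D" if "q < m" for q
    using assms that by (cases "pin q") (auto simp: pinned_event_def)
  then show ?thesis using assms(2) by (auto simp: in_set_conv_nth)
qed

lemma card_Diff_ratio_le:
  assumes "finite R" "D \<subseteq> R" "0 < card R" "card R \<le> N"
  shows "real (card (R - D)) / card R \<le> 1 - real (card D) / N"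
proof -
  have "card (R - D) = card R - card D" and "card D \<le> card R"
    using assms(1,2) by (auto simp: card_Diff_subset finite_subset card_mono)
  then have "real (card (R - D)) / card R = 1 - real (card D) / card R"
    using assms(3) by (simp add: field_simps)
  also have "\<dots> \<le> 1 - real (card D) / N"
    using assms(3,4) by (simp add: frac_le)
  finally show ?thesis .
qed

lemma pinned_event_step_bound:
  assumes D: "D \<subseteq> Kn_edges n" and pin_D: "\<And>p e. pin p = Some e \<Longrightarrow> e \<notin> D"
    and es: "length es = m" "distinct es" "set es \<subseteq> Kn_edges n" and m: "m < card (Kn_edges n)"
    and ev: "es \<in> pinned_event pin T D m"
  shows "measure_pmf.prob (pmf_of_set (Kn_edges n - set es)) {e. es @ [e] \<in> pinned_event pin T D (Suc m)}
           \<le> step_factor pin T D (card (Kn_edges n)) m"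
proof -
  let ?N = "card (Kn_edges n)"
  define R where "R = Kn_edges n - set es"
  define C where "C = {e. (\<forall>e'. pin m = Some e' \<longrightarrow> e = e') \<and> (m < T \<longrightarrow> pin m = None \<longrightarrow> e \<notin> D)}"
  have Rfin: "finite R" and cR: "card R = ?N - m" unfolding R_def
    using es finite_Kn_edges by (simp_all add: card_Diff_subset distinct_card)
  have Rpos: "card R > 0" using cR m by simp
  then have Rne: "R \<noteq> {}" by auto
  have "{e. es @ [e] \<in> pinned_event pin T D (Suc m)} = C"
    using pinned_event_snoc[OF es(1)] ev unfolding C_def by auto
  then have prob: "measure_pmf.prob (pmf_of_set R) {e. es @ [e] \<in> pinned_event pin T D (Suc m)}
      = card (R \<inter> C) / card R"
    by (simp add: measure_pmf_of_set[OF Rne Rfin])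
  consider (pinned) e' where "pin m = Some e'" | (late) "pin m = None" "\<not> m < T"
    | (early) "pin m = None" "m < T"
    by (cases "pin m") auto
  then have "card (R \<inter> C) / card R \<le> step_factor pin T D ?N m"
  proof cases
    case pinned
    then have "card (R \<inter> C) \<le> 1" using card_mono[of "{e'}" "R \<inter> C"] unfolding C_def by auto
    then show ?thesis using pinned cR by (simp add: step_factor_def divide_right_mono)
  next
    case late
    then show ?thesis using Rfin Rpos card_mono[of R "R \<inter> C"] by (simp add: step_factor_def divide_le_eq_1)
  next
    case early
    have "set es \<inter> D = {}"
      using pinned_event_avoids[OF ev es(1) less_imp_le[OF early(2)]] pin_D by blast
    then have "D \<subseteq> R" using D unfolding R_def by auto
    moreover have "R \<inter> C = R - D" using early unfolding C_def by auto
    ultimately show ?thesis using card_Diff_ratio_le[OF Rfin _ Rpos, of D ?N] cR early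
      by (simp add: step_factor_def)
  qed
  then show ?thesis using prob unfolding R_def by simp
qed

lemma pinned_event_bound:
  assumes D: "D \<subseteq> Kn_edges n" and pin_D: "\<And>p e. pin p = Some e \<Longrightarrow> e \<notin> D"
    and m: "m \<le> card (Kn_edges n)"
  shows "measure_pmf.prob (graph_process n m) (pinned_event pin T D m)
           \<le> (\<Prod>p<m. step_factor pin T D (card (Kn_edges n)) p)"
  using m
proof (induction m)
  case 0 then show ?case by (simp add: pinned_event_def)
next
  case (Suc m)
  let ?N = "card (Kn_edges n)" and ?E = "pinned_event pin T D"
  have f0: "step_factor pin T D ?N m \<ge> 0" using step_factor_nonneg[OF D] .
  have "measure_pmf.prob (graph_process n (Suc m)) (?E (Suc m))
     \<le> step_factor pin T D ?N m * measure_pmf.prob (graph_process n m) (?E m)"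
    unfolding graph_process.simps
  proof (rule measure_bind_pmf_le[OF _ f0])
    fix es assume "es \<in> set_pmf (graph_process n m)"
    then have es: "length es = m" "distinct es" "set es \<subseteq> Kn_edges n"
      using graph_process_support Suc.prems by (auto dest: Suc_leD)
    show "measure_pmf.prob (map_pmf (\<lambda>e. es @ [e]) (pmf_of_set (Kn_edges n - set es))) (?E (Suc m))
          \<le> step_factor pin T D ?N m * indicator (?E m) es"
    proof (cases "es \<in> ?E m")
      case True
      then show ?thesis
        using pinned_event_step_bound[OF D pin_D es] Suc.prems by (simp add: vimage_def)
    next
      case False
      then have "(\<lambda>e. es @ [e]) -` ?E (Suc m) = {}" using pinned_event_snoc[OF es(1)] by auto
      then show ?thesis using False by simp
    qed
  qed
  also have "\<dots> \<le> step_factor pin T D ?N m * (\<Prod>p<m. step_factor pin T D ?N p)"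
    using Suc f0 by (intro mult_left_mono) auto
  finally show ?case by (simp add: mult.commute)
qed

lemma card_unpinned_before:
  assumes "finite P" "card P \<le> K" "T \<le> M"
  shows "T - K \<le> card (({..<M} - P) \<inter> {p. p < T})"
proof -
  have "card ({..<T} - P) \<le> card (({..<M} - P) \<inter> {p. p < T})" using assms(3) by (intro card_mono) auto
  moreover have "T - card P \<le> card ({..<T} - P)"
    using assms(1) by (metis card_lessThan diff_card_le_card_Diff)
  ultimately show ?thesis using assms(2) by linarith
qed

lemma prod_step_factor_bound:
  fixes N M T K d :: nat and D :: "nat set set"
  assumes MN: "M < N" and TM: "T \<le> M" and cP: "card {p. p < M \<and> pin p \<noteq> None} \<le> K"
    and dD: "d \<le> card D" and DN: "card D \<le> N"
  shows "(\<Prod>p<M. step_factor pin T D N p) \<le> (1 / real (N - M)) ^ card {p. p < M \<and> pin p \<noteq> None}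
           * (1 - real d / N) ^ (T - K)"
proof -
  define P where "P = {p. p < M \<and> pin p \<noteq> None}"
  define x where "x = 1 - real (card D) / N"
  have x0: "0 \<le> x" "x \<le> 1" using DN MN unfolding x_def by (auto simp: divide_le_eq_1)
  have xd: "x \<le> 1 - real d / N" using dD MN unfolding x_def by (simp add: frac_le)
  have PM: "P \<subseteq> {..<M}" and fP: "finite P" unfolding P_def by auto
  have split: "(\<Prod>p<M. step_factor pin T D N p)
      = (\<Prod>p\<in>P. step_factor pin T D N p) * (\<Prod>p\<in>{..<M}-P. step_factor pin T D N p)"
    using PM by (metis finite_lessThan prod.subset_diff mult.commute)
  have pinned: "(\<Prod>p\<in>P. step_factor pin T D N p) \<le> (\<Prod>p\<in>P. 1 / real (N - M))"
  proof (rule prod_mono)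
    fix p assume "p \<in> P"
    then obtain e where e: "pin p = Some e" and pM: "p < M" unfolding P_def by auto
    then have "1 / real (N - p) \<le> 1 / real (N - M)" using MN by (simp add: frac_le)
    then show "0 \<le> step_factor pin T D N p \<and> step_factor pin T D N p \<le> 1 / real (N - M)"
      using e by (simp add: step_factor_def)
  qed
  have unpinned_eq: "(\<Prod>p\<in>{..<M}-P. step_factor pin T D N p) = x ^ card (({..<M} - P) \<inter> {p. p < T})"
  proof -
    have "(\<Prod>p\<in>{..<M}-P. step_factor pin T D N p) = (\<Prod>p\<in>{..<M}-P. if p < T then x else 1)"
      by (rule prod.cong) (auto simp: step_factor_def P_def x_def)
    then show ?thesis by (simp add: prod.If_cases Int_def)
  qed
  have "T - K \<le> card (({..<M} - P) \<inter> {p. p < T})"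
    using card_unpinned_before[OF fP _ TM] cP unfolding P_def by blast
  then have "x ^ card (({..<M} - P) \<inter> {p. p < T}) \<le> (1 - real d / N) ^ (T - K)"
    using x0 xd by (meson order.trans power_decreasing power_mono)
  then have unpinned: "(\<Prod>p\<in>{..<M}-P. step_factor pin T D N p) \<le> (1 - real d / N) ^ (T - K)"
    using unpinned_eq by simp
  have "0 \<le> (\<Prod>p\<in>P. step_factor pin T D N p)"
    using pinned by (intro prod_nonneg) (auto simp: step_factor_def P_def)
  moreover have "0 \<le> (\<Prod>p\<in>{..<M}-P. step_factor pin T D N p)" using unpinned_eq x0 by simp
  ultimately show ?thesis
    unfolding split P_def[symmetric] using pinned unpinned by (simp add: mult_mono)
qed

section \<open>Walks and paths\<close>

fun path_edges :: "'a list \<Rightarrow> 'a set list" where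
  "path_edges (x # y # r) = {x, y} # path_edges (y # r)"
| "path_edges _ = []"

lemma length_path_edges: "length (path_edges xs) = length xs - 1"
  by (induction xs rule: path_edges.induct) auto

lemma nth_path_edges: "i < length xs - 1 \<Longrightarrow> path_edges xs ! i = {xs ! i, xs ! Suc i}"
proof (induction xs arbitrary: i rule: path_edges.induct)
  case (1 x y r) then show ?case by (cases i) auto
qed auto

lemma path_edges_append: "path_edges (a @ x # c) = path_edges (a @ [x]) @ path_edges (x # c)"
proof (induction a)
  case Nil then show ?case by (cases c) auto
next
  case (Cons y a) then show ?case by (cases a) auto
qed

lemma path_edges_subset: "e \<in> set (path_edges xs) \<Longrightarrow> e \<subseteq> set xs"
  by (induction xs rule: path_edges.induct) auto

lemma distinct_path_edges: "distinct xs \<Longrightarrow> distinct (path_edges xs)"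
proof (induction xs rule: path_edges.induct)
  case (1 x y r)
  have "{x, y} \<notin> set (path_edges (y # r))"
    using 1 path_edges_subset[of "{x, y}" "y # r"] by auto
  then show ?case using 1 by simp
qed auto

lemma Union_path_edges: "length xs \<ge> 2 \<Longrightarrow> \<Union>(set (path_edges xs)) = set xs"
proof (induction xs rule: path_edges.induct)
  case (1 x y r) then show ?case by (cases r) auto
qed auto

lemma walk_of_len_iff:
  "walk_of_len E u v k \<longleftrightarrow>
   (\<exists>xs. length xs = Suc k \<and> hd xs = u \<and> last xs = v \<and> set (path_edges xs) \<subseteq> E)"
proof -
  have "(\<forall>i<k. {xs ! i, xs ! Suc i} \<in> E) \<longleftrightarrow> set (path_edges xs) \<subseteq> E" if "length xs = Suc k" for xs
  proof
    assume "\<forall>i<k. {xs ! i, xs ! Suc i} \<in> E"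
    then show "set (path_edges xs) \<subseteq> E"
      using that by (auto simp: in_set_conv_nth length_path_edges nth_path_edges)
  next
    assume edges: "set (path_edges xs) \<subseteq> E"
    show "\<forall>i<k. {xs ! i, xs ! Suc i} \<in> E"
    proof (intro allI impI)
      fix i assume "i < k"
      then have "path_edges xs ! i \<in> set (path_edges xs)" using that by (simp add: length_path_edges)
      then show "{xs ! i, xs ! Suc i} \<in> E" using edges that \<open>i < k\<close> by (auto simp: nth_path_edges)
    qed
  qed
  then show ?thesis unfolding walk_of_len_def by metis
qed

text \<open>Shortcutting repeated vertices turns a walk into a path with the same ends.\<close>
lemma walk_to_path:
  assumes "length xs = Suc k" and "set (path_edges xs) \<subseteq> E"
  shows "\<exists>ys. length ys \<le> Suc k \<and> hd ys = hd xs \<and> last ys = last xs \<and> distinct ys \<and> ys \<noteq> []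
              \<and> set (path_edges ys) \<subseteq> E"
  using assms
proof (induction k arbitrary: xs rule: less_induct)
  case (less k)
  show ?case
  proof (cases "distinct xs")
    case True then show ?thesis using less.prems by (intro exI[of _ xs]) auto
  next
    case False
    then obtain a x b c where xs: "xs = a @ [x] @ b @ [x] @ c" using not_distinct_decomp by blast
    define ys where "ys = a @ x # c"
    have "path_edges xs = path_edges (a @ [x]) @ path_edges (x # b @ [x]) @ path_edges (x # c)"
      unfolding xs using path_edges_append[of a x "b @ x # c"] path_edges_append[of "x # b" x c] by simp
    then have edges: "set (path_edges ys) \<subseteq> E" using less.prems(2) unfolding ys_def
      by (auto simp: path_edges_append[of a x c])
    have len: "length ys = Suc (k - Suc (length b))" "k - Suc (length b) < k"
      using less.prems(1) unfolding xs ys_def by auto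
    have ends: "hd ys = hd xs" "last ys = last xs" unfolding xs ys_def
      by (cases a; simp)+
    show ?thesis using less.IH[OF len(2) len(1) edges] ends len by force
  qed
qed

lemma short_path:
  assumes E: "E \<subseteq> Kn_edges n" and uv: "u \<noteq> v" and dist: "\<not> gdist E u v > 10"
  shows "\<exists>xs. 2 \<le> length xs \<and> length xs \<le> 11 \<and> hd xs = u \<and> last xs = v \<and> distinct xs
           \<and> set xs \<subseteq> {..<n} \<and> set (path_edges xs) \<subseteq> E"
proof -
  have "(INF k \<in> {k. walk_of_len E u v k}. enat k) < 11"
    using dist unfolding gdist_def by (simp add: not_less order_le_less_trans[of _ 10])
  then obtain k where k: "walk_of_len E u v k" "enat k < 11" by (auto simp: INF_less_iff)
  have k10: "k \<le> 10" using k(2) by (simp add: numeral_eq_enat)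
  obtain xs where xs: "length xs = Suc k" "hd xs = u" "last xs = v" "set (path_edges xs) \<subseteq> E"
    using k(1) walk_of_len_iff by metis
  obtain ys where ys: "length ys \<le> Suc k" "hd ys = u" "last ys = v" "distinct ys" "ys \<noteq> []"
     "set (path_edges ys) \<subseteq> E"
    using walk_to_path[OF xs(1) xs(4)] xs by metis
  have two: "length ys \<ge> 2"
  proof (rule ccontr)
    assume "\<not> length ys \<ge> 2"
    then obtain y where "ys = [y]" using ys(5) by (cases ys) (auto simp: not_less_eq_eq)
    then show False using ys uv by simp
  qed
  have "set ys \<subseteq> {..<n}"
    using Union_path_edges[OF two] ys(6) E unfolding Kn_edges_def by auto
  then show ?thesis using ys two k10 by (intro exI[of _ ys]) auto
qed

section \<open>Witnesses\<close>

definition incident_edges :: "nat \<Rightarrow> nat \<Rightarrow> nat \<Rightarrow> nat set set" where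
  "incident_edges n u v = {e \<in> Kn_edges n. u \<in> e \<or> v \<in> e}"

lemma finite_incident_edges: "finite (incident_edges n u v)"
  unfolding incident_edges_def using finite_Kn_edges by simp

lemma card_incident_edges_upper: "card (incident_edges n u v) \<le> 2 * n"
proof -
  have "incident_edges n u v \<subseteq> (\<lambda>w. {u, w}) ` {..<n} \<union> (\<lambda>w. {v, w}) ` {..<n}"
  proof
    fix e assume "e \<in> incident_edges n u v"
    then have e: "e \<subseteq> {..<n}" "card e = 2" "u \<in> e \<or> v \<in> e"
      unfolding incident_edges_def Kn_edges_def by auto
    then obtain a b where "e = {a, b}" "a \<noteq> b" by (meson card_2_iff)
    then show "e \<in> (\<lambda>w. {u, w}) ` {..<n} \<union> (\<lambda>w. {v, w}) ` {..<n}"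
      using e by (auto simp: insert_commute)
  qed
  then have "card (incident_edges n u v) \<le> card ((\<lambda>w. {u, w}) ` {..<n}) + card ((\<lambda>w. {v, w}) ` {..<n})"
    by (meson card_Un_le card_mono finite_UnI finite_imageI finite_lessThan order_trans)
  also have "\<dots> \<le> n + n" by (intro add_mono) (metis card_image_le card_lessThan finite_lessThan)+
  finally show ?thesis by simp
qed

lemma card_incident_edges_lower:
  assumes "u < n" "v < n" "u \<noteq> v"
  shows "2 * n - 3 \<le> card (incident_edges n u v)"
proof -
  let ?A = "(\<lambda>w. {u, w}) ` ({..<n} - {u})" and ?B = "(\<lambda>w. {v, w}) ` ({..<n} - {u, v})"
  have "?A \<union> ?B \<subseteq> incident_edges n u v" using assms unfolding incident_edges_def Kn_edges_def by auto
  then have "card (?A \<union> ?B) \<le> card (incident_edges n u v)"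
    using finite_incident_edges by (rule card_mono[rotated])
  moreover have "card ?A = n - 1"
    by (subst card_image) (auto simp: inj_on_def doubleton_eq_iff assms)
  moreover have "card ?B = n - 2"
    by (subst card_image) (auto simp: inj_on_def doubleton_eq_iff assms card_Diff_subset)
  moreover have "?A \<inter> ?B = {}" using assms by (auto simp: doubleton_eq_iff)
  ultimately show ?thesis by (simp add: card_Un_disjoint)
qed

lemma card_incident_low_degree:
  assumes "finite S" "degree S u \<le> 2" "degree S v \<le> 2"
  shows "card (S \<inter> incident_edges n u v) \<le> 4"
proof -
  have "S \<inter> incident_edges n u v \<subseteq> {e \<in> S. u \<in> e} \<union> {e \<in> S. v \<in> e}"
    unfolding incident_edges_def by auto
  then have "card (S \<inter> incident_edges n u v) \<le> card ({e \<in> S. u \<in> e} \<union> {e \<in> S. v \<in> e})"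
    using assms(1) by (intro card_mono) auto
  also have "\<dots> \<le> card {e \<in> S. u \<in> e} + card {e \<in> S. v \<in> e}" by (rule card_Un_le)
  finally show ?thesis using assms(2,3) unfolding degree_def by simp
qed

text \<open>A witness (xs, ps, as, rs) for a bad edge sequence: a path xs with j edges, the
  positions ps of its edges among the first t1, a list as of b further edges at the ends
  of the path, and their positions rs among the first t0; all positions distinct.\<close>
type_synonym witness = "nat list \<times> nat list \<times> nat set list \<times> nat list"

definition witnesses :: "nat \<Rightarrow> nat \<Rightarrow> nat \<Rightarrow> witness set" where
 "witnesses n j b = {(xs, ps, as, rs). set xs \<subseteq> {..<n} \<and> length xs = Suc j \<and> distinct xs \<and>
     set ps \<subseteq> {..<t1 n} \<and> length ps = j \<and> set as \<subseteq> incident_edges n (hd xs) (last xs) \<and>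
     length as = b \<and> set rs \<subseteq> {..<t0 n} \<and> length rs = b \<and> distinct (ps @ rs)}"

definition avoid_set :: "nat \<Rightarrow> nat list \<Rightarrow> nat set list \<Rightarrow> nat set set" where
  "avoid_set n xs as = incident_edges n (hd xs) (last xs) - set (path_edges xs) - set as"

definition witness_event :: "nat \<Rightarrow> witness \<Rightarrow> nat set list set" where
  "witness_event n w = (case w of (xs, ps, as, rs) \<Rightarrow>
      pinned_event (map_of (zip (ps @ rs) (path_edges xs @ as))) (t0 n) (avoid_set n xs as) (t1 n))"

definition bad_event :: "nat \<Rightarrow> nat set list set" where
  "bad_event n = {es. \<exists>u v. u < n \<and> v < n \<and> u \<noteq> v \<and>
                 degree (set (take (t0 n) es)) u \<le> 2 \<and>
                 degree (set (take (t0 n) es)) v \<le> 2 \<and>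
                 \<not> gdist (set es) u v > 10}"

definition position :: "'a list \<Rightarrow> 'a \<Rightarrow> nat" where
  "position xs x = (SOME p. p < length xs \<and> xs ! p = x)"

lemma position: "x \<in> set xs \<Longrightarrow> position xs x < length xs \<and> xs ! position xs x = x"
  unfolding position_def by (rule someI_ex) (simp add: in_set_conv_nth)

lemma position_nth: "distinct xs \<Longrightarrow> q < length xs \<Longrightarrow> position xs (xs ! q) = q"
  using position[of "xs ! q" xs] nth_eq_iff_index_eq[of xs "position xs (xs ! q)" q] by simp

lemma position_take: "distinct xs \<Longrightarrow> x \<in> set (take T xs) \<Longrightarrow> position xs x < T"
  by (auto simp: in_set_conv_nth position_nth)

lemma pin_at_positions:
  assumes "distinct es" "distinct L" "set L \<subseteq> set es"
  shows "distinct (map (position es) L)"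
    and "map_of (zip (map (position es) L) L) p = Some e \<Longrightarrow> es ! p = e"
proof -
  have "inj_on (position es) (set L)"
  proof (rule inj_onI)
    fix x y assume "x \<in> set L" "y \<in> set L" "position es x = position es y"
    then show "x = y" using position[of x es] position[of y es] assms(3) by auto
  qed
  then show "distinct (map (position es) L)" using assms(2) by (simp add: distinct_map)
next
  assume "map_of (zip (map (position es) L) L) p = Some e"
  then have "(p, e) \<in> set (zip (map (position es) L) L)" by (rule map_of_SomeD)
  then obtain i where "i < length L" "p = position es (L ! i)" "e = L ! i" by (auto simp: in_set_zip)
  moreover have "L ! i \<in> set es" using \<open>i < length L\<close> assms(3) by auto
  ultimately show "es ! p = e" using position[of e es] by simp
qed

lemma path_witness:
  assumes es: "distinct es" "length es = t1 n"
    and xs: "distinct xs" "set xs \<subseteq> {..<n}" "length xs = Suc j" "set (path_edges xs) \<subseteq> set es"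
    and as: "distinct as"
      "set as = set (take (t0 n) es) \<inter> incident_edges n (hd xs) (last xs) - set (path_edges xs)"
  shows "\<exists>w\<in>witnesses n j (length as). es \<in> witness_event n w"
proof -
  define L where "L = path_edges xs @ as"
  have L: "distinct L" "set L \<subseteq> set es"
    unfolding L_def using distinct_path_edges[OF xs(1)] as xs(4) set_take_subset by fastforce+
  define ps where "ps = map (position es) (path_edges xs)"
  define rs where "rs = map (position es) as"
  have pos_L: "map (position es) L = ps @ rs" unfolding L_def ps_def rs_def by simp
  have "set rs \<subseteq> {..<t0 n}" unfolding rs_def using as(2) position_take[OF es(1)] by auto
  moreover have "set ps \<subseteq> {..<t1 n}" unfolding ps_def using position xs(4) es(2) by fastforce
  moreover have "distinct (ps @ rs)" using pin_at_positions(1)[OF es(1) L] pos_L by simp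
  ultimately have w: "(xs, ps, as, rs) \<in> witnesses n j (length as)"
    unfolding witnesses_def using xs as by (auto simp: ps_def rs_def length_path_edges)
  have "es \<in> witness_event n (xs, ps, as, rs)"
    unfolding witness_event_def pinned_event_def
  proof (simp, intro conjI allI impI)
    fix p e assume "map_of (zip (ps @ rs) (path_edges xs @ as)) p = Some e"
    then have "map_of (zip (map (position es) L) L) p = Some e" unfolding pos_L by (simp only: L_def)
    then show "es ! p = e" by (rule pin_at_positions(2)[OF es(1) L])
  next
    fix q assume q: "q < t1 n" "q < t0 n"
    then have "take (t0 n) es ! q \<in> set (take (t0 n) es)" using es(2) by (intro nth_mem) simp
    then have "es ! q \<in> set (take (t0 n) es)" using q by simp
    then show "es ! q \<notin> avoid_set n xs as" using as(2) unfolding avoid_set_def by auto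
  qed
  then show ?thesis using w by blast
qed

lemma bad_event_witnessed:
  assumes es: "es \<in> set_pmf (graph_process n (t1 n))" and tN: "t1 n \<le> card (Kn_edges n)"
    and bad: "es \<in> bad_event n"
  shows "\<exists>j\<in>{1..10}. \<exists>b\<in>{..4}. \<exists>w\<in>witnesses n j b. es \<in> witness_event n w"
proof -
  have es_len: "length es = t1 n" and es_dist: "distinct es" and es_Kn: "set es \<subseteq> Kn_edges n"
    using graph_process_support[OF tN es] by auto
  define S where "S = set (take (t0 n) es)"
  obtain u v where uv: "u \<noteq> v" and du: "degree S u \<le> 2" and dv: "degree S v \<le> 2"
    and far: "\<not> gdist (set es) u v > 10"
    using bad unfolding bad_event_def S_def by auto
  obtain xs where xs: "2 \<le> length xs" "length xs \<le> 11" "hd xs = u" "last xs = v" "distinct xs"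
     "set xs \<subseteq> {..<n}" "set (path_edges xs) \<subseteq> set es"
    using short_path[OF es_Kn uv far] by blast
  obtain as where as: "distinct as" "set as = S \<inter> incident_edges n u v - set (path_edges xs)"
    using finite_distinct_list[of "S \<inter> incident_edges n u v - set (path_edges xs)"] S_def by auto
  have "length as = card (set as)" using as(1) by (simp add: distinct_card)
  also have "\<dots> \<le> card (S \<inter> incident_edges n u v)"
    using as(2) unfolding S_def by (intro card_mono) auto
  also have "\<dots> \<le> 4" using card_incident_low_degree du dv unfolding S_def by blast
  finally have b4: "length as \<le> 4" .
  have "length xs = Suc (length xs - 1)" using xs(1) by simp
  from path_witness[OF es_dist es_len xs(5,6) this xs(7) as(1)] as(2) xs(3,4)
  obtain w where "w \<in> witnesses n (length xs - 1) (length as)" "es \<in> witness_event n w"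
    unfolding S_def by blast
  then show ?thesis using xs(1,2) b4 by force
qed

text \<open>Counting witnesses: n^(j+1) paths, t1^j positions for their edges, at most (2n)^b
  choices of extra edges and t0^b positions for them.\<close>
lemma card_witnesses:
  "finite (witnesses n j b) \<and> card (witnesses n j b) \<le> n ^ Suc j * t1 n ^ j * ((2 * n) ^ b * t0 n ^ b)"
proof -
  define X where "X = {xs::nat list. set xs \<subseteq> {..<n} \<and> length xs = Suc j}"
  define P where "P = {ps::nat list. set ps \<subseteq> {..<t1 n} \<and> length ps = j}"
  define A where "A xs = {as::nat set list. set as \<subseteq> incident_edges n (hd xs) (last xs) \<and> length as = b}" for xs
  define R where "R = {rs::nat list. set rs \<subseteq> {..<t0 n} \<and> length rs = b}"
  have fin: "finite X" "finite P" "finite R" "finite (A xs)" for xs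
    unfolding X_def P_def R_def A_def by (simp_all add: finite_lists_length_eq finite_incident_edges)
  have cX: "card X = n ^ Suc j" and cP: "card P = t1 n ^ j" and cR: "card R = t0 n ^ b"
    unfolding X_def P_def R_def by (simp_all add: card_lists_length_eq)
  have cA: "card (A xs) \<le> (2 * n) ^ b" for xs unfolding A_def
    using card_lists_length_eq[OF finite_incident_edges] power_mono[OF card_incident_edges_upper[of n "hd xs" "last xs"], of b]
    by simp
  have sub: "witnesses n j b \<subseteq> Sigma X (\<lambda>xs. P \<times> (A xs \<times> R))"
    unfolding witnesses_def X_def P_def A_def R_def by auto
  have fS: "finite (Sigma X (\<lambda>xs. P \<times> (A xs \<times> R)))" using fin by auto
  have "card (Sigma X (\<lambda>xs. P \<times> (A xs \<times> R))) = (\<Sum>xs\<in>X. card P * (card (A xs) * card R))"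
    using fin by (simp add: card_cartesian_product)
  also have "\<dots> \<le> (\<Sum>xs\<in>X. t1 n ^ j * ((2 * n) ^ b * t0 n ^ b))"
    unfolding cP cR by (intro sum_mono mult_le_mono order_refl cA)
  also have "\<dots> = n ^ Suc j * t1 n ^ j * ((2 * n) ^ b * t0 n ^ b)" using cX by simp
  finally show ?thesis using card_mono[OF fS sub] finite_subset[OF sub fS] by simp
qed

lemma card_avoid_set:
  assumes "set xs \<subseteq> {..<n}" "length xs = Suc j" "distinct xs" "1 \<le> j" "length as = b"
  shows "2 * n - 3 - j - b \<le> card (avoid_set n xs as)"
proof -
  have ne: "xs \<noteq> []" using assms(2) by auto
  then have "hd xs \<in> set xs" "last xs \<in> set xs" by auto
  then have ends: "hd xs < n" "last xs < n" using assms(1) by auto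
  have "hd xs \<noteq> last xs"
    using assms(2-4) ne by (simp add: hd_conv_nth last_conv_nth nth_eq_iff_index_eq)
  then have "2 * n - 3 \<le> card (incident_edges n (hd xs) (last xs))"
    using card_incident_edges_lower ends by blast
  moreover have "card (set (path_edges xs)) \<le> j" "card (set as) \<le> b"
    using card_length[of "path_edges xs"] card_length[of as] assms(2,5) by (simp_all add: length_path_edges)
  moreover have "card (incident_edges n (hd xs) (last xs)) - card (set (path_edges xs)) - card (set as)
      \<le> card (avoid_set n xs as)"
    unfolding avoid_set_def by (meson diff_card_le_card_Diff diff_le_mono finite_Diff finite_set order.trans)
  ultimately show ?thesis by linarith
qed

text \<open>The bound on the probability of the event of a witness with j \<le> 10 path edges and
  b \<le> 4 extra edges: j + b pinned positions, and t0 - 14 positions that avoid at least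
  2n - 17 edges.\<close>
definition witness_prob :: "nat \<Rightarrow> nat \<Rightarrow> nat \<Rightarrow> real" where
  "witness_prob n j b = (1 / real (card (Kn_edges n) - t1 n)) ^ (j + b)
     * (1 - real (2 * n - 17) / card (Kn_edges n)) ^ (t0 n - 14)"

lemma witness_event_bound:
  assumes w: "w \<in> witnesses n j b" and j: "1 \<le> j" "j \<le> 10" and b: "b \<le> 4"
    and tN: "t1 n < card (Kn_edges n)" and tt: "t0 n \<le> t1 n"
  shows "measure_pmf.prob (graph_process n (t1 n)) (witness_event n w) \<le> witness_prob n j b"
proof -
  obtain xs ps as rs where w_eq: "w = (xs, ps, as, rs)" by (cases w) auto
  note W = w[unfolded w_eq witnesses_def, simplified]
  define pin where "pin = map_of (zip (ps @ rs) (path_edges xs @ as))"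
  define D where "D = avoid_set n xs as"
  let ?N = "card (Kn_edges n)"
  have D: "D \<subseteq> Kn_edges n" unfolding D_def avoid_set_def incident_edges_def by auto
  have pin_D: "\<And>p e. pin p = Some e \<Longrightarrow> e \<notin> D"
    unfolding pin_def D_def avoid_set_def by (auto dest!: map_of_SomeD set_zip_rightD)
  have pinned: "{p. p < t1 n \<and> pin p \<noteq> None} = set (ps @ rs)"
  proof -
    have "length (ps @ rs) = length (path_edges xs @ as)" using W by (simp add: length_path_edges)
    then have "{p. pin p \<noteq> None} = set (ps @ rs)" unfolding pin_def using dom_map_of_zip dom_def by metis
    moreover have "set (ps @ rs) \<subseteq> {..<t1 n}" using W tt by auto
    ultimately show ?thesis by auto
  qed
  then have card_pinned: "card {p. p < t1 n \<and> pin p \<noteq> None} = j + b"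
    using W distinct_card[of "ps @ rs"] by simp
  have "2 * n - 17 \<le> card D" using card_avoid_set[of xs n j as b] W j b unfolding D_def by linarith
  moreover have "card D \<le> ?N" using D finite_Kn_edges card_mono by blast
  ultimately have "(\<Prod>p<t1 n. step_factor pin (t0 n) D ?N p)
      \<le> (1 / real (?N - t1 n)) ^ (j + b) * (1 - real (2 * n - 17) / ?N) ^ (t0 n - 14)"
    using prod_step_factor_bound[OF tN tt, where pin = pin and K = 14 and d = "2 * n - 17" and D = D] card_pinned j b by simp
  moreover have "measure_pmf.prob (graph_process n (t1 n)) (witness_event n w)
      \<le> (\<Prod>p<t1 n. step_factor pin (t0 n) D ?N p)"
    unfolding witness_event_def w_eq pin_def D_def
    using pinned_event_bound[OF D pin_D, where m = "t1 n" and T = "t0 n"] tN unfolding pin_def D_def by simp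
  ultimately show ?thesis unfolding witness_prob_def by linarith
qed

lemma bad_event_union_bound:
  assumes tN: "t1 n < card (Kn_edges n)" and tt: "t0 n \<le> t1 n"
  shows "measure_pmf.prob (graph_process n (t1 n)) (bad_event n)
     \<le> (\<Sum>j\<in>{1..10}. \<Sum>b\<in>{..4}. real (card (witnesses n j b)) * witness_prob n j b)"
proof -
  let ?p = "graph_process n (t1 n)"
  let ?W = "\<lambda>j b. \<Union>w\<in>witnesses n j b. witness_event n w"
  have fin: "finite (witnesses n j b)" for j b using card_witnesses by blast
  have "bad_event n \<inter> set_pmf ?p \<subseteq> (\<Union>j\<in>{1..10}. \<Union>b\<in>{..4}. ?W j b)"
    using bad_event_witnessed[OF _ less_imp_le[OF tN]] by blast
  then have "measure_pmf.prob ?p (bad_event n) \<le> measure_pmf.prob ?p (\<Union>j\<in>{1..10}. \<Union>b\<in>{..4}. ?W j b)"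
    by (metis measure_Int_set_pmf measure_pmf.finite_measure_mono sets_measure_pmf UNIV_I)
  also have "\<dots> \<le> (\<Sum>j\<in>{1..10}. measure_pmf.prob ?p (\<Union>b\<in>{..4}. ?W j b))"
    by (intro measure_pmf.finite_measure_subadditive_finite) auto
  also have "\<dots> \<le> (\<Sum>j\<in>{1..10}. \<Sum>b\<in>{..4}. measure_pmf.prob ?p (?W j b))"
    by (intro sum_mono measure_pmf.finite_measure_subadditive_finite) auto
  also have "\<dots> \<le> (\<Sum>j\<in>{1..10}. \<Sum>b\<in>{..4}. \<Sum>w\<in>witnesses n j b. measure_pmf.prob ?p (witness_event n w))"
    using fin by (intro sum_mono measure_pmf.finite_measure_subadditive_finite) auto
  also have "\<dots> \<le> (\<Sum>j\<in>{1..10}. \<Sum>b\<in>{..4}. \<Sum>w\<in>witnesses n j b. witness_prob n j b)"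
    using witness_event_bound[OF _ _ _ _ tN tt] by (intro sum_mono) auto
  finally show ?thesis by simp
qed

section \<open>Asymptotics\<close>

definition t1_real :: "real \<Rightarrow> real" where "t1_real x = x / 2 * (ln x + 2 * ln (ln x))"
definition t0_real :: "real \<Rightarrow> real" where "t0_real x = x / 2 * (ln x - 2 * ln (ln x))"
definition pairs_real :: "real \<Rightarrow> real" where "pairs_real x = x * (x - 1) / 2"

text \<open>The final bound on the probability of the bad event: 50 choices of (j, b), n
  choices of the first vertex, a factor of order log n per path edge and per extra edge,
  and the probability exp(-(4/n) t0) = (log n)^4 / n^2 of avoiding the edges at u and v.\<close>
definition bad_bound :: "real \<Rightarrow> real" where
  "bad_bound x = 50 * x * (1 + x * t1_real x / (pairs_real x - t1_real x)) ^ 10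
     * (1 + 2 * x * t0_real x / (pairs_real x - t1_real x)) ^ 4
     * exp (- ((2 * x - 17) / pairs_real x) * (t0_real x - 15))"

lemma bad_bound_tendsto_zero: "(bad_bound \<longlongrightarrow> 0) at_top"
  unfolding bad_bound_def t1_real_def t0_real_def pairs_real_def by real_asymp

definition large :: "nat \<Rightarrow> bool" where
  "large n \<longleftrightarrow> 9 \<le> real n \<and> t1_real (real n) < pairs_real (real n) \<and> 15 \<le> t0_real (real n)
     \<and> 0 \<le> ln (ln (real n))"

lemma eventually_large: "eventually large sequentially"
proof -
  have "eventually (\<lambda>x. t1_real x < pairs_real x) at_top"
    unfolding t1_real_def pairs_real_def by real_asymp
  moreover have "eventually (\<lambda>x. 15 \<le> t0_real x) at_top"
    unfolding t0_real_def by real_asymp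
  moreover have "eventually (\<lambda>x::real. 1 \<le> ln x) at_top"
    using ln_at_top by (simp add: filterlim_at_top)
  moreover have "eventually (\<lambda>x::real. 9 \<le> x) at_top" by (rule eventually_ge_at_top)
  ultimately have "eventually (\<lambda>x. 9 \<le> x \<and> t1_real x < pairs_real x \<and> 15 \<le> t0_real x
      \<and> 0 \<le> ln (ln x)) at_top"
    by eventually_elim auto
  from eventually_compose_filterlim[OF this filterlim_real_sequentially] show ?thesis
    unfolding large_def .
qed

lemma card_Kn_edges_real: "real (card (Kn_edges n)) = pairs_real (real n)"
proof -
  have "even (n * (n - 1))" by auto
  then have "real (2 * (n choose 2)) = real (n * (n - 1))" by (simp add: choose_two)
  then show ?thesis unfolding card_Kn_edges pairs_real_def by (cases n) (auto simp: algebra_simps)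
qed

lemma real_nat_floor_le: "0 \<le> z \<Longrightarrow> real (nat \<lfloor>z\<rfloor>) \<le> z"
  by simp

lemma large_times:
  assumes "large n"
  shows "t1 n < card (Kn_edges n)" and "t0 n \<le> t1 n" and "real (t1 n) \<le> t1_real (real n)"
    and "t0_real (real n) - 1 \<le> real (t0 n)" and "real (t0 n) \<le> t0_real (real n)" and "14 \<le> t0 n"
proof -
  have ln: "0 \<le> ln (real n)" "0 \<le> ln (ln (real n))" using assms by (auto simp: large_def)
  then have "0 \<le> t1_real (real n)" unfolding t1_real_def by simp
  then show t1: "real (t1 n) \<le> t1_real (real n)"
    unfolding t1_def t1_real_def by (rule real_nat_floor_le)
  then show "t1 n < card (Kn_edges n)" using assms card_Kn_edges_real[of n]
    by (simp add: large_def flip: of_nat_less_iff)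
  show "t0 n \<le> t1 n" unfolding t0_def t1_def
    using ln by (intro nat_mono floor_mono mult_left_mono) auto
  show t0: "t0_real (real n) - 1 \<le> real (t0 n)" unfolding t0_def t0_real_def by linarith
  show "real (t0 n) \<le> t0_real (real n)"
    using assms unfolding large_def t0_def t0_real_def by (intro real_nat_floor_le) simp
  show "14 \<le> t0 n" using t0 assms unfolding large_def by linarith
qed

text \<open>Used to bound the factors for j \<le> 10 path edges and b \<le> 4 extra edges uniformly.\<close>
lemma power_le_one_plus_power:
  fixes y Y :: real
  assumes "0 \<le> y" "y \<le> Y" "k \<le> K"
  shows "y ^ k \<le> (1 + Y) ^ K"
proof -
  have "y ^ k \<le> (1 + Y) ^ k" using assms by (intro power_mono) auto
  also have "\<dots> \<le> (1 + Y) ^ K" using assms by (intro power_increasing) auto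
  finally show ?thesis .
qed

lemma one_minus_power_le_exp:
  fixes a :: real
  assumes "a \<le> 1"
  shows "(1 - a) ^ k \<le> exp (- a * real k)"
proof -
  have "(1 - a) ^ k \<le> exp (- a) ^ k" using assms exp_ge_add_one_self[of "- a"] by (intro power_mono) auto
  then show ?thesis by (simp add: exp_of_nat_mult[symmetric] mult.commute)
qed

lemma avoid_rate_le_one:
  assumes "9 \<le> x"
  shows "(2 * x - 17) / pairs_real x \<le> 1"
proof -
  have "2 * x - 17 \<le> 9 * (x - 1) / 2" using assms by simp
  also have "\<dots> \<le> x * (x - 1) / 2" using assms by (intro divide_right_mono mult_right_mono) auto
  finally have "2 * x - 17 \<le> x * (x - 1) / 2" .
  moreover have "0 < pairs_real x" unfolding pairs_real_def using assms by simp
  ultimately show ?thesis unfolding pairs_real_def by simp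
qed

lemma witness_term_bound:
  assumes n: "large n" and j: "j \<le> 10" and b: "b \<le> 4"
  shows "real (card (witnesses n j b)) * witness_prob n j b \<le> bad_bound (real n) / 50"
proof -
  define x where "x = real n"
  define c where "c = real (card (Kn_edges n) - t1 n)"
  define a where "a = real (2 * n - 17) / real (card (Kn_edges n))"
  define gap where "gap = pairs_real x - t1_real x"
  have x9: "9 \<le> x" and gap: "0 < gap" and t0_15: "15 \<le> t0_real x"
    using n unfolding large_def x_def gap_def by auto
  note times = large_times[OF n, folded x_def]
  have N: "real (card (Kn_edges n)) = pairs_real x" unfolding x_def by (rule card_Kn_edges_real)
  have c: "gap \<le> c" unfolding c_def gap_def using times(1,3) N by simp
  have a: "a = (2 * x - 17) / pairs_real x" unfolding a_def N using x9 by (simp add: x_def)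
  have a0: "0 \<le> a" unfolding a_def by simp
  have a1: "a \<le> 1" unfolding a by (rule avoid_rate_le_one[OF x9])
  have path: "0 \<le> x * real (t1 n) / c \<and> x * real (t1 n) / c \<le> x * t1_real x / gap"
    using times(3) c gap x9 by (auto intro!: frac_le mult_left_mono)
  have extra: "0 \<le> 2 * x * real (t0 n) / c \<and> 2 * x * real (t0 n) / c \<le> 2 * x * t0_real x / gap"
    using times(5) c gap x9 t0_15 by (auto intro!: frac_le mult_left_mono)
  have "(1 - a) ^ (t0 n - 14) \<le> exp (- a * real (t0 n - 14))" using a1 by (rule one_minus_power_le_exp)
  also have "\<dots> \<le> exp (- a * (t0_real x - 15))"
    using times(4,6) a0 by (simp add: mult_left_mono)
  finally have avoid: "(1 - a) ^ (t0 n - 14) \<le> exp (- a * (t0_real x - 15))" .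
  have "real (card (witnesses n j b)) * witness_prob n j b
      \<le> real (n ^ Suc j * t1 n ^ j * ((2 * n) ^ b * t0 n ^ b)) * witness_prob n j b"
  proof (rule mult_right_mono)
    show "real (card (witnesses n j b)) \<le> real (n ^ Suc j * t1 n ^ j * ((2 * n) ^ b * t0 n ^ b))"
      using card_witnesses[of n j b] by (simp only: of_nat_le_iff)
    show "0 \<le> witness_prob n j b" using a1 by (simp add: witness_prob_def a_def)
  qed
  also have "\<dots> = x * (x * real (t1 n) / c) ^ j * (2 * x * real (t0 n) / c) ^ b * (1 - a) ^ (t0 n - 14)"
    unfolding witness_prob_def x_def c_def a_def
    by (simp add: power_add field_simps)
  also have "\<dots> \<le> x * (1 + x * t1_real x / gap) ^ 10 * (1 + 2 * x * t0_real x / gap) ^ 4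
      * exp (- a * (t0_real x - 15))"
    using power_le_one_plus_power[OF _ _ j] power_le_one_plus_power[OF _ _ b] path extra avoid x9 a1
    by (intro mult_mono mult_nonneg_nonneg zero_le_power) auto
  also have "\<dots> = bad_bound x / 50" unfolding bad_bound_def gap_def a by simp
  finally show ?thesis unfolding x_def .
qed

lemma bad_event_prob_le:
  assumes "large n"
  shows "measure_pmf.prob (graph_process n (t1 n)) (bad_event n) \<le> bad_bound (real n)"
proof -
  have "measure_pmf.prob (graph_process n (t1 n)) (bad_event n)
      \<le> (\<Sum>j\<in>{1..10::nat}. \<Sum>b\<in>{..4::nat}. real (card (witnesses n j b)) * witness_prob n j b)"
    using bad_event_union_bound large_times(1,2)[OF assms] by blast
  also have "\<dots> \<le> (\<Sum>j\<in>{1..10::nat}. \<Sum>b\<in>{..4::nat}. bad_bound (real n) / 50)"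
    using witness_term_bound[OF assms] by (intro sum_mono) auto
  also have "\<dots> = bad_bound (real n)" by simp
  finally show ?thesis .
qed

theorem mainTheorem11:
  shows "(\<lambda>n. measure_pmf.prob (graph_process n (t1 n))
            {es. \<forall>u v. u < n \<longrightarrow> v < n \<longrightarrow> u \<noteq> v \<longrightarrow>
                 degree (set (take (t0 n) es)) u \<le> 2 \<longrightarrow>
                 degree (set (take (t0 n) es)) v \<le> 2 \<longrightarrow>
                 gdist (set es) u v > 10}) \<longlonglongrightarrow> 1"
proof -
  let ?bad = "\<lambda>n. measure_pmf.prob (graph_process n (t1 n)) (bad_event n)"
  have good: "{es. \<forall>u v. u < n \<longrightarrow> v < n \<longrightarrow> u \<noteq> v \<longrightarrow>
                 degree (set (take (t0 n) es)) u \<le> 2 \<longrightarrow>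
                 degree (set (take (t0 n) es)) v \<le> 2 \<longrightarrow>
                 gdist (set es) u v > 10} = - bad_event n" for n
    unfolding bad_event_def by auto
  have "?bad \<longlonglongrightarrow> 0"
  proof (rule tendsto_sandwich[OF _ _ tendsto_const])
    show "\<forall>\<^sub>F n in sequentially. 0 \<le> ?bad n" by simp
    show "\<forall>\<^sub>F n in sequentially. ?bad n \<le> bad_bound (real n)"
      using eventually_large by eventually_elim (rule bad_event_prob_le)
    show "(\<lambda>n. bad_bound (real n)) \<longlonglongrightarrow> 0"
      by (rule filterlim_compose[OF bad_bound_tendsto_zero filterlim_real_sequentially])
  qed
  then have "(\<lambda>n. 1 - ?bad n) \<longlonglongrightarrow> 1" using tendsto_diff[OF tendsto_const] by fastforce
  moreover have "measure_pmf.prob p (- A) = 1 - measure_pmf.prob p A" for p :: "nat set list pmf" and A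
    using measure_pmf.prob_compl[of A p] by (simp add: Compl_eq_Diff_UNIV)
  ultimately show ?thesis unfolding good by simp
qed

end
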